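(* Let $X$ be a finite-dimensional Euclidean space and $C\subset X$ a cone. Then $C$ is smooth if and only if both $C$ and its polar cone $C^\circ$ are strictly convex.
   Context: A cone $C$ is regular if it is pointed, closed, convex, with nonempty interior. $C^\circ=\{y:\langle x,y\rangle\le0\ \forall x\in C\}$. A convex subset $\mathcal F\subset C$ is a face if whenever $x,y\in C$ and $\lambda x+(1-\lambda)y\in\mathcal F$ for some $0<\lambda<1$, then $x,y\in\mathcal F$. A ray is $\{\lambda x:\lambda\ge0\}$, $x\neq0$; an extreme ray is a ray in $C$ that is a face. A regular cone is strictly convex if every face other than the cone itself and $\{0\}$ has dimension one. A regular cone $C$ is smooth if every boundary point of $C$ lies on an extreme ray of $C$ and, for every non-zero point $x$ of any extreme ray, the normal cone $N_C(x)$ has dimension one. *)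

theory Defs
  imports "HOL-Analysis.Analysis"
begin

definition pointed_cone :: "'a::euclidean_space set \<Rightarrow> bool" where
  "pointed_cone C \<longleftrightarrow> C \<inter> uminus ` C \<subseteq> {0}"

definition regular_cone :: "'a::euclidean_space set \<Rightarrow> bool" where
  "regular_cone C \<longleftrightarrow> cone C \<and> pointed_cone C \<and> closed C \<and> convex C \<and> interior C \<noteq> {}"

definition polar_cone :: "'a::euclidean_space set \<Rightarrow> 'a set" where
  "polar_cone C = {y. \<forall>x\<in>C. inner x y \<le> 0}"

definition ray :: "'a::euclidean_space \<Rightarrow> 'a set" where
  "ray x = {c *\<^sub>R x | c. c \<ge> 0}"

definition extreme_ray :: "'a::euclidean_space set \<Rightarrow> 'a set \<Rightarrow> bool" where
  "extreme_ray C R \<longleftrightarrow> (\<exists>x. x \<noteq> 0 \<and> R = ray x \<and> R face_of C)"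

definition normal_cone :: "'a::euclidean_space set \<Rightarrow> 'a \<Rightarrow> 'a set" where
  "normal_cone C x = {y. \<forall>z\<in>C. inner (z - x) y \<le> 0}"

text \<open>Faces are taken nonempty (every nonempty face of a cone contains 0);
  dimension of a face = dimension of its linear span.\<close>
definition strictly_convex_cone :: "'a::euclidean_space set \<Rightarrow> bool" where
  "strictly_convex_cone C \<longleftrightarrow> regular_cone C \<and>
     (\<forall>F. F face_of C \<and> F \<noteq> {} \<and> F \<noteq> C \<and> F \<noteq> {0} \<longrightarrow> dim F = 1)"

definition smooth_cone :: "'a::euclidean_space set \<Rightarrow> bool" where
  "smooth_cone C \<longleftrightarrow> regular_cone C \<and>
     (\<forall>x\<in>frontier C. \<exists>R. extreme_ray C R \<and> x \<in> R) \<and>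
     (\<forall>R x. extreme_ray C R \<and> x \<in> R \<and> x \<noteq> 0 \<longrightarrow> dim (normal_cone C x) = 1)"

end

theory Submission
  imports Defs
begin

text \<open>A closed convex cone C is supported at each boundary point x by a nonzero y of the polar
  cone with x \<bullet> y = 0; these supporting vectors are the nonzero elements of the normal cone
  at x, which is a face of the polar cone, and by the bipolar theorem boundary points of the polar
  cone are supported in the same way by boundary points of C. If C is smooth, a proper face of C
  lies in the extreme ray through one of its relative interior points, and a proper face of the
  polar cone lies in the one-dimensional normal cone at a boundary point of C supporting it.
  Conversely, if C is strictly convex, the face cut out by a supporting hyperplane at a nonzero
  boundary point x is a pointed one-dimensional cone, hence the ray through x; if the polar cone
  is strictly convex, the normal cone at x, a proper face of it other than {0}, is
  one-dimensional. The origin lies on the ray through a nonzero boundary point, which exists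
  because the unit sphere is connected in dimension at least 2.\<close>

lemma orthogonal_to_set_with_interior_eq_0:
  fixes a :: "'a::euclidean_space"
  assumes "interior S \<noteq> {}" "S \<subseteq> {x. a \<bullet> x = 0}"
  shows "a = 0"
proof (rule ccontr)
  assume "a \<noteq> 0"
  then have "dim S < DIM('a)"
    using dim_subset[OF assms(2)] dim_hyperplane[of a] DIM_positive[where 'a='a] by linarith
  then show False
    using empty_interior_lowdim assms(1) by blast
qed

lemma dim_ray_le_1: "dim (ray x) \<le> 1"
proof -
  have "ray x \<subseteq> span {x}"
    unfolding ray_def by (auto intro: span_scale span_base)
  then have "dim (ray x) \<le> dim {x}"
    using dim_subset dim_span by metis
  also have "\<dots> \<le> 1"
    by simp
  finally show ?thesis .
qed

lemma in_ray_self: "x \<in> ray x"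
  unfolding ray_def by (rule CollectI, rule exI[of _ 1]) simp

lemma zero_in_ray: "0 \<in> ray x"
  unfolding ray_def by (rule CollectI, rule exI[of _ 0]) simp

lemma dim_eq_1_if_subset_dim_le_1:
  fixes G :: "'a::euclidean_space set"
  assumes "G \<subseteq> N" "dim N \<le> 1" "\<not> G \<subseteq> {0}"
  shows "dim G = 1"
proof -
  have "dim G \<noteq> 0"
    using assms(3) by (simp del: not_gr_zero)
  then show ?thesis
    using dim_subset[OF assms(1)] assms(2) by linarith
qed

lemma pointed_coneD:
  assumes "pointed_cone C" "x \<in> C" "- x \<in> C"
  shows "x = 0"
proof -
  have "x \<in> C \<inter> uminus ` C"
    using assms(2,3) by (metis IntI image_eqI minus_minus)
  then show ?thesis
    using assms(1) unfolding pointed_cone_def by blast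
qed

lemma cone_eq_ray_if_dim_1:
  fixes E :: "'a::euclidean_space set"
  assumes "cone E" "pointed_cone E" "dim E = 1" "x \<in> E" "x \<noteq> 0"
  shows "E = ray x"
proof
  show "ray x \<subseteq> E"
    using assms(1,4) unfolding ray_def cone_def by blast
  show "E \<subseteq> ray x"
  proof
    fix z assume zE: "z \<in> E"
    have "span {x} = span E"
      by (rule dim_eq_span) (use assms(3,4,5) in simp_all)
    then have "z \<in> span {x}"
      using zE span_base by metis
    then obtain k where k: "z = k *\<^sub>R x"
      by (auto simp: span_singleton)
    have "k \<ge> 0"
    proof (rule ccontr)
      assume "\<not> k \<ge> 0"
      then have "- x = (- 1 / k) *\<^sub>R z" "- 1 / k \<ge> 0"
        using k by simp_all
      then have "- x \<in> E"
        using assms(1) zE unfolding cone_def by metis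
      then show False
        using pointed_coneD[OF assms(2,4)] assms(5) by blast
    qed
    then show "z \<in> ray x"
      using k unfolding ray_def by blast
  qed
qed

lemma face_of_subset_frontier:
  fixes F :: "'a::real_normed_vector set"
  assumes "F face_of S" "F \<noteq> S" "closed S"
  shows "F \<subseteq> frontier S"
  using face_of_disjoint_interior[OF assms(1,2)] face_of_imp_subset[OF assms(1)] assms(3)
  by (auto simp: frontier_def)

lemma rel_interior_nonzero:
  fixes G :: "'a::euclidean_space set"
  assumes "convex G" "\<not> G \<subseteq> {0}"
  obtains y where "y \<in> rel_interior G" "y \<noteq> 0"
proof -
  have "\<not> rel_interior G \<subseteq> {0}"
  proof
    assume "rel_interior G \<subseteq> {0}"
    then have "closure (rel_interior G) \<subseteq> {0}"
      by (rule closure_minimal[OF _ closed_singleton])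
    then show False
      using convex_closure_rel_interior[OF assms(1)] closure_subset assms(2) by auto
  qed
  then show ?thesis
    using that by blast
qed

lemma regular_coneD:
  assumes "regular_cone C"
  shows "cone C" "closed C" "convex C" "interior C \<noteq> {}" "0 \<in> C" "pointed_cone C"
  using assms interior_subset cone_contains_0 unfolding regular_cone_def by blast+

lemma polar_cone_eq_Inter: "polar_cone C = (\<Inter>x\<in>C. {y. x \<bullet> y \<le> 0})"
  unfolding polar_cone_def by auto

lemma cone_polar_cone: "cone (polar_cone C)"
  unfolding cone_def polar_cone_def by (auto simp: mult_nonneg_nonpos)

lemma closed_polar_cone: "closed (polar_cone C)"
  unfolding polar_cone_eq_Inter by (intro closed_INT ballI closed_halfspace_le)

lemma convex_polar_cone: "convex (polar_cone C)"
  unfolding polar_cone_eq_Inter by (intro convex_INT ballI convex_halfspace_le)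

lemma zero_in_polar_cone: "0 \<in> polar_cone C"
  unfolding polar_cone_def by simp

lemma polar_cone_polar_cone:
  fixes C :: "'a::euclidean_space set"
  assumes "cone C" "closed C" "convex C" "C \<noteq> {}"
  shows "polar_cone (polar_cone C) = C"
proof
  show "C \<subseteq> polar_cone (polar_cone C)"
    unfolding polar_cone_def by (auto simp: inner_commute)
  show "polar_cone (polar_cone C) \<subseteq> C"
  proof
    fix z assume z: "z \<in> polar_cone (polar_cone C)"
    show "z \<in> C"
    proof (rule ccontr)
      assume "z \<notin> C"
      then obtain a b where ab: "a \<bullet> z < b" "\<forall>x\<in>C. a \<bullet> x > b"
        using separating_hyperplane_closed_point[OF assms(3,2)] by blast
      have b: "b < 0"
        using ab(2) assms(1,4) cone_contains_0 by fastforce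
      have "a \<bullet> x \<ge> 0" if "x \<in> C" for x
      proof (rule ccontr)
        assume "\<not> a \<bullet> x \<ge> 0"
        \<comment> \<open>rescaling x onto the hyperplane a \<bullet> x = b contradicts the separation\<close>
        then have "(b / (a \<bullet> x)) *\<^sub>R x \<in> C" "a \<bullet> ((b / (a \<bullet> x)) *\<^sub>R x) = b"
          using assms(1) that b unfolding cone_def by (auto simp: zero_le_divide_iff)
        then show False
          using ab(2) by fastforce
      qed
      then have "- a \<in> polar_cone C"
        by (simp add: polar_cone_def inner_commute)
      then have "- a \<bullet> z \<le> 0"
        using z unfolding polar_cone_def by blast
      then show False
        using ab(1) b by simp
    qed
  qed
qed

lemma regular_cone_polar_cone:
  fixes C :: "'a::euclidean_space set"
  assumes "regular_cone C"
  shows "regular_cone (polar_cone C)"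
proof -
  note C = regular_coneD[OF assms]
  have "pointed_cone (polar_cone C)"
    unfolding pointed_cone_def
  proof
    fix y assume "y \<in> polar_cone C \<inter> uminus ` polar_cone C"
    then have "C \<subseteq> {x. y \<bullet> x = 0}"
      unfolding polar_cone_def by (force simp: inner_commute)
    then show "y \<in> {0}"
      using orthogonal_to_set_with_interior_eq_0 C(4) by blast
  qed
  moreover have "interior (polar_cone C) \<noteq> {}"
  proof
    assume "interior (polar_cone C) = {}"
    then obtain a b where a: "a \<noteq> 0" "polar_cone C \<subseteq> {x. a \<bullet> x = b}"
      using empty_interior_subset_hyperplane[OF convex_polar_cone] by blast
    then have "b = 0"
      using zero_in_polar_cone by fastforce
    then have "a \<in> polar_cone (polar_cone C)" "- a \<in> polar_cone (polar_cone C)"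
      using a(2) unfolding polar_cone_def[of "polar_cone C"] by (auto simp: inner_commute)
    then show False
      using polar_cone_polar_cone[OF C(1-3)] C(5) pointed_coneD[OF C(6)] a(1) by auto
  qed
  ultimately show ?thesis
    unfolding regular_cone_def using cone_polar_cone closed_polar_cone convex_polar_cone by blast
qed

lemma frontier_cone_supporting_polar:
  fixes C :: "'a::euclidean_space set"
  assumes "cone C" "closed C" "convex C" "interior C \<noteq> {}" "x \<in> frontier C"
  obtains y where "y \<noteq> 0" "y \<in> polar_cone C" "x \<bullet> y = 0"
proof -
  have xC: "x \<in> C"
    using assms(2,5) frontier_subset_closed by blast
  have "x \<notin> interior C"
    using assms(5) by (simp add: frontier_def)
  then have "x \<notin> rel_interior C"
    using assms(4) rel_interior_nonempty_interior by metis
  then obtain a where a: "a \<noteq> 0" "\<And>z. z \<in> C \<Longrightarrow> a \<bullet> x \<le> a \<bullet> z"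
    using supporting_hyperplane_relative_frontier[OF assms(3)] xC closure_subset
    by (metis subsetD)
  have "0 \<in> C" "2 *\<^sub>R x \<in> C"
    using assms(1) xC cone_contains_0 unfolding cone_def by auto
  \<comment> \<open>a \<bullet> x is minimal on C, and C contains 0 and 2x\<close>
  then have ax: "a \<bullet> x = 0"
    using a(2)[of 0] a(2)[of "2 *\<^sub>R x"] by simp
  show ?thesis
  proof (rule that)
    show "- a \<noteq> 0" "x \<bullet> - a = 0"
      using a(1) ax by (simp_all add: inner_commute)
    show "- a \<in> polar_cone C"
      using a(2) ax by (simp add: polar_cone_def inner_commute)
  qed
qed

lemma polar_cone_orthogonal_interior_eq_0:
  fixes C :: "'a::euclidean_space set"
  assumes "y \<in> polar_cone C" "x \<in> interior C" "x \<bullet> y = 0"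
  shows "y = 0"
proof (rule ccontr)
  assume y: "y \<noteq> 0"
  obtain e where e: "e > 0" "ball x e \<subseteq> C"
    using assms(2) mem_interior by blast
  define z where "z = x + (e / 2 / norm y) *\<^sub>R y"
  have "dist x z = e / 2"
    using y e by (simp add: z_def dist_norm)
  then have "z \<in> C"
    using e by auto
  then have "z \<bullet> y \<le> 0"
    using assms(1) unfolding polar_cone_def by blast
  moreover have "z \<bullet> y = (e / 2 / norm y) * (y \<bullet> y)"
    using assms(3) by (simp add: z_def inner_add_left)
  moreover have "(e / 2 / norm y) * (y \<bullet> y) > 0"
    using e y by simp
  ultimately show False
    by linarith
qed

lemma normal_cone_of_cone:
  assumes "cone C" "x \<in> C"
  shows "normal_cone C x = polar_cone C \<inter> {y. x \<bullet> y = 0}"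
proof (intro set_eqI iffI)
  fix y assume y: "y \<in> normal_cone C x"
  have "0 \<in> C" "2 *\<^sub>R x \<in> C"
    using assms cone_contains_0 unfolding cone_def by auto
  then have "(0 - x) \<bullet> y \<le> 0" "(2 *\<^sub>R x - x) \<bullet> y \<le> 0"
    using y unfolding normal_cone_def by blast+
  then have "x \<bullet> y = 0"
    by (simp add: inner_diff_left)
  then show "y \<in> polar_cone C \<inter> {y. x \<bullet> y = 0}"
    using y unfolding normal_cone_def polar_cone_def by (force simp: inner_diff_left)
next
  fix y assume "y \<in> polar_cone C \<inter> {y. x \<bullet> y = 0}"
  then show "y \<in> normal_cone C x"
    unfolding normal_cone_def polar_cone_def by (auto simp: inner_diff_left)
qed

lemma normal_cone_face_of_polar_cone:
  assumes "cone C" "x \<in> C"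
  shows "normal_cone C x face_of polar_cone C"
  unfolding normal_cone_of_cone[OF assms]
  by (rule face_of_Int_supporting_hyperplane_le[OF convex_polar_cone])
     (use assms(2) in \<open>auto simp: polar_cone_def\<close>)

lemma regular_cone_frontier_nonzero:
  fixes C :: "'a::euclidean_space set"
  assumes "regular_cone C" "DIM('a) \<ge> 2"
  obtains q where "q \<in> frontier C" "q \<noteq> 0"
proof -
  note C = regular_coneD[OF assms(1)]
  have "C \<noteq> {0}"
    using C(4) by auto
  then obtain x where x: "x \<in> C" "x \<noteq> 0"
    using C(5) by blast
  define u where "u = x /\<^sub>R norm x"
  have u: "u \<in> C" "u \<in> sphere 0 1"
    using x C(1) unfolding u_def cone_def by auto
  moreover have "- u \<in> sphere 0 1 - C"
    using pointed_coneD[OF C(6) u(1)] u(2) by auto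
  ultimately have "sphere (0::'a) 1 \<inter> frontier C \<noteq> {}"
    by (intro connected_Int_frontier connected_sphere assms(2)) blast+
  then show ?thesis
    using that by fastforce
qed

lemma extreme_ray_ray_frontier:
  fixes C :: "'a::euclidean_space set"
  assumes "strictly_convex_cone C" "x \<in> frontier C" "x \<noteq> 0"
  shows "extreme_ray C (ray x)"
proof -
  have reg: "regular_cone C"
    using assms(1) unfolding strictly_convex_cone_def by blast
  note C = regular_coneD[OF reg]
  have xC: "x \<in> C"
    using assms(2) C(2) frontier_subset_closed by blast
  obtain y where y: "y \<noteq> 0" "y \<in> polar_cone C" "x \<bullet> y = 0"
    using frontier_cone_supporting_polar[OF C(1-4) assms(2)] .
  define E where "E = C \<inter> {z. y \<bullet> z = 0}"
  have E: "E face_of C"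
    unfolding E_def by (rule face_of_Int_supporting_hyperplane_le[OF C(3)])
      (use y(2) in \<open>auto simp: polar_cone_def inner_commute\<close>)
  have xE: "x \<in> E"
    using xC y(3) by (simp add: E_def inner_commute)
  have "E \<noteq> C"
  proof
    assume "E = C"
    then have "C \<subseteq> {z. y \<bullet> z = 0}"
      unfolding E_def by blast
    then show False
      using orthogonal_to_set_with_interior_eq_0[OF C(4)] y(1) by blast
  qed
  then have "dim E = 1"
    using assms(1,3) E xE unfolding strictly_convex_cone_def by blast
  moreover have "cone E"
    using C(1) unfolding E_def cone_def by auto
  moreover have "pointed_cone E"
    using reg unfolding E_def regular_cone_def pointed_cone_def by blast
  ultimately have "E = ray x"
    using cone_eq_ray_if_dim_1 xE assms(3) by blast
  then show ?thesis
    unfolding extreme_ray_def using E assms(3) by blast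
qed

lemma smooth_cone_imp_strictly_convex_cone:
  fixes C :: "'a::euclidean_space set"
  assumes "smooth_cone C"
  shows "strictly_convex_cone C"
  unfolding strictly_convex_cone_def
proof (intro conjI allI impI)
  show reg: "regular_cone C"
    using assms unfolding smooth_cone_def by blast
  fix F assume F: "F face_of C \<and> F \<noteq> {} \<and> F \<noteq> C \<and> F \<noteq> {0}"
  then obtain x where x: "x \<in> rel_interior F"
    using face_of_imp_convex rel_interior_eq_empty by blast
  then have "x \<in> frontier C"
    using face_of_subset_frontier[of F C] F regular_coneD(2)[OF reg] rel_interior_subset by blast
  then obtain R where R: "extreme_ray C R" "x \<in> R"
    using assms unfolding smooth_cone_def by blast
  then obtain r where r: "R = ray r" "R face_of C"
    unfolding extreme_ray_def by blast
  have "F \<subseteq> ray r"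
    using subset_of_face_of[OF r(2)] F face_of_imp_subset x R(2) r(1) by blast
  then show "dim F = 1"
    using dim_eq_1_if_subset_dim_le_1 dim_ray_le_1 F by blast
qed

lemma smooth_cone_imp_strictly_convex_polar_cone:
  fixes C :: "'a::euclidean_space set"
  assumes "smooth_cone C"
  shows "strictly_convex_cone (polar_cone C)"
  unfolding strictly_convex_cone_def
proof (intro conjI allI impI)
  have reg: "regular_cone C"
    using assms unfolding smooth_cone_def by blast
  note C = regular_coneD[OF reg]
  note P = regular_coneD[OF regular_cone_polar_cone[OF reg]]
  show "regular_cone (polar_cone C)"
    using regular_cone_polar_cone[OF reg] .
  fix G assume G: "G face_of polar_cone C \<and> G \<noteq> {} \<and> G \<noteq> polar_cone C \<and> G \<noteq> {0}"
  then have G0: "\<not> G \<subseteq> {0}"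
    by blast
  then obtain y where y: "y \<in> rel_interior G" "y \<noteq> 0"
    using rel_interior_nonzero[of G] G face_of_imp_convex by blast
  have y_frontier: "y \<in> frontier (polar_cone C)"
    using face_of_subset_frontier[of G "polar_cone C"] G P(2) rel_interior_subset y(1) by blast
  then have yP: "y \<in> polar_cone C"
    using P(2) frontier_subset_closed by blast
  obtain a where a: "a \<noteq> 0" "a \<in> polar_cone (polar_cone C)" "y \<bullet> a = 0"
    using frontier_cone_supporting_polar[OF P(1-4) y_frontier] .
  have aC: "a \<in> C"
    using a(2) polar_cone_polar_cone[OF C(1-3)] C(5) by auto
  have "a \<notin> interior C"
    using polar_cone_orthogonal_interior_eq_0[OF yP] a(3) y(2) by (auto simp: inner_commute)
  then have "a \<in> frontier C"
    using aC C(2) by (simp add: frontier_def)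
  then have "dim (normal_cone C a) = 1"
    using assms a(1) unfolding smooth_cone_def by blast
  moreover have "G \<subseteq> normal_cone C a"
  proof (rule subset_of_face_of[OF normal_cone_face_of_polar_cone[OF C(1) aC]])
    show "G \<subseteq> polar_cone C"
      using G face_of_imp_subset by blast
    show "normal_cone C a \<inter> rel_interior G \<noteq> {}"
      using normal_cone_of_cone[OF C(1) aC] yP a(3) y(1) by (auto simp: inner_commute)
  qed
  ultimately show "dim G = 1"
    using dim_eq_1_if_subset_dim_le_1 G0 by (metis order_refl)
qed

lemma strictly_convex_cones_imp_smooth_cone:
  fixes C :: "'a::euclidean_space set"
  assumes "DIM('a) \<ge> 2" "strictly_convex_cone C" "strictly_convex_cone (polar_cone C)"
  shows "smooth_cone C"
proof -
  have reg: "regular_cone C"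
    using assms(2) unfolding strictly_convex_cone_def by blast
  note C = regular_coneD[OF reg]
  note P = regular_coneD[OF regular_cone_polar_cone[OF reg]]
  have on_ray: "\<exists>R. extreme_ray C R \<and> x \<in> R" if "x \<in> frontier C" for x
  proof (cases "x = 0")
    case True
    obtain q where "q \<in> frontier C" "q \<noteq> 0"
      using regular_cone_frontier_nonzero[OF reg assms(1)] .
    then show ?thesis
      using extreme_ray_ray_frontier[OF assms(2)] True zero_in_ray by blast
  next
    case False
    then show ?thesis
      using extreme_ray_ray_frontier[OF assms(2) that] in_ray_self by blast
  qed
  have "dim (normal_cone C x) = 1" if R: "extreme_ray C R" and xR: "x \<in> R" and x0: "x \<noteq> 0"
    for R x
  proof -
    obtain r where r: "R = ray r" "R face_of C"
      using R unfolding extreme_ray_def by blast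
    have "dim R < DIM('a)"
      using dim_ray_le_1[of r] assms(1) r(1) by simp
    then have "R \<noteq> C"
      using empty_interior_lowdim C(4) by blast
    then have x: "x \<in> frontier C"
      using face_of_subset_frontier[OF r(2)] C(2) xR by blast
    then have xC: "x \<in> C"
      using C(2) frontier_subset_closed by blast
    obtain y where "y \<noteq> 0" "y \<in> polar_cone C" "x \<bullet> y = 0"
      using frontier_cone_supporting_polar[OF C(1-4) x] .
    then have "\<not> normal_cone C x \<subseteq> {0}"
      using normal_cone_of_cone[OF C(1) xC] by blast
    moreover have "normal_cone C x \<noteq> polar_cone C"
    proof
      assume "normal_cone C x = polar_cone C"
      then have "polar_cone C \<subseteq> {y. x \<bullet> y = 0}"
        using normal_cone_of_cone[OF C(1) xC] by blast
      then show False
        using orthogonal_to_set_with_interior_eq_0 P(4) x0 by blast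
    qed
    ultimately show ?thesis
      using assms(3) normal_cone_face_of_polar_cone[OF C(1) xC]
      unfolding strictly_convex_cone_def by blast
  qed
  then show ?thesis
    using reg on_ray unfolding smooth_cone_def by blast
qed

theorem proposition8:
  fixes C :: "'a::euclidean_space set"
  assumes "DIM('a) \<ge> 2"
    and "regular_cone C"
  shows "smooth_cone C \<longleftrightarrow> strictly_convex_cone C \<and> strictly_convex_cone (polar_cone C)"
  using smooth_cone_imp_strictly_convex_cone smooth_cone_imp_strictly_convex_polar_cone
    strictly_convex_cones_imp_smooth_cone[OF assms(1)] by blast

end
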